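(* Let $x_0,\dots,x_d\in\mathbb{D}$ be distinct and $w_0,w_1\in\mathbb{C}^n$. Suppose there exists $\gamma>0$ such that $|x_0-x_1|\le\gamma$ and $\mathrm{dist}([x_0,x_1],\{x_2,\dots,x_d\})\ge2\gamma$, where $[x_0,x_1]$ is the real line segment from $x_0$ to $x_1$. Let $P$ be the unique $\mathbb{C}^n$-valued polynomial of degree at most $d$ with $P(x_0)=w_0$, $P(x_1)=w_1$, $P(x_j)=0$ for $2\le j\le d$. Then there exist constants $L_0,L_1$ depending only on $\gamma$ and $d$ such that $$\sup_{\zeta\in\mathbb{D}}\|P(\zeta)\|\le L_1\left\|\frac{w_1-w_0}{x_1-x_0}\right\|+L_0\|w_0\|.$$
   Context: $\mathbb{D}$ is the unit disk in $\mathbb{C}$ and $\|\cdot\|$ the Euclidean norm on $\mathbb{C}^n$. *)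

theory Defs
  imports "HOL-Analysis.Analysis" "HOL-Computational_Algebra.Polynomial"
begin

text \<open>Euclidean norm on C^n, vectors represented as functions nat => complex
  with components indexed by 0..n-1.\<close>
definition cvnorm :: "nat \<Rightarrow> (nat \<Rightarrow> complex) \<Rightarrow> real" where
  "cvnorm n v = L2_set (\<lambda>i. cmod (v i)) {..<n}"

end

theory Submission
  imports Defs
begin

text \<open>Put \<open>q(t) = \<Prod>\<^sub>j\<^sub>=\<^sub>2\<^sup>d (t - x\<^sub>j)/2\<close>. Every component of \<open>P\<close> vanishes at
  \<open>x\<^sub>2, \<dots>, x\<^sub>d\<close>, so it equals \<open>q\<close> times the linear function interpolating \<open>w/q\<close> at \<open>x\<^sub>0, x\<^sub>1\<close>:
  \<open>P(\<zeta>) = q(\<zeta>) (w\<^sub>0/q(x\<^sub>0) + (\<zeta> - x\<^sub>0) (w\<^sub>1/q(x\<^sub>1) - w\<^sub>0/q(x\<^sub>0))/(x\<^sub>1 - x\<^sub>0))\<close>.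
  Regrouping writes \<open>P(\<zeta>)\<close> as \<open>a w\<^sub>0 + b (w\<^sub>1 - w\<^sub>0)/(x\<^sub>1 - x\<^sub>0)\<close> with scalar coefficients
  \<open>a, b\<close>. On the disk \<open>|q| \<le> 1\<close> and \<open>q\<close> is \<open>(d-1)/2\<close>-Lipschitz, while the separation
  hypothesis gives \<open>|q| \<ge> \<gamma>\<^sup>d\<^sup>-\<^sup>1\<close> on the segment \<open>[x\<^sub>0, x\<^sub>1]\<close>; this bounds \<open>|a|\<close> and \<open>|b|\<close>
  in terms of \<open>\<gamma>\<close> and \<open>d\<close> alone.\<close>

lemma cvnorm_nonneg: "0 \<le> cvnorm n v"
  by (simp add: cvnorm_def)

lemma cvnorm_linear_combination_le:
  fixes a b :: complex
  shows "cvnorm n (\<lambda>i. a * u i + b * v i) \<le> cmod a * cvnorm n u + cmod b * cvnorm n v"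
proof -
  have "cvnorm n (\<lambda>i. a * u i + b * v i)
      \<le> L2_set (\<lambda>i. cmod a * cmod (u i) + cmod b * cmod (v i)) {..<n}"
    unfolding cvnorm_def
    by (rule L2_set_mono) (auto simp: norm_mult intro: norm_triangle_le)
  also have "\<dots> \<le> L2_set (\<lambda>i. cmod a * cmod (u i)) {..<n} + L2_set (\<lambda>i. cmod b * cmod (v i)) {..<n}"
    by (rule L2_set_triangle_ineq)
  also have "\<dots> = cmod a * cvnorm n u + cmod b * cvnorm n v"
    unfolding cvnorm_def by (simp add: L2_set_right_distrib)
  finally show ?thesis .
qed

definition node_poly :: "(nat \<Rightarrow> complex) \<Rightarrow> nat set \<Rightarrow> complex poly" where
  "node_poly x J = (\<Prod>j\<in>J. [:- x j / 2, 1 / 2:])"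

lemma poly_node_poly: "poly (node_poly x J) t = (\<Prod>j\<in>J. (t - x j) / 2)"
  by (simp add: node_poly_def poly_prod diff_divide_distrib)

lemma degree_node_poly_le: "degree (node_poly x J) \<le> card J"
proof (cases "finite J")
  case True
  have "degree (node_poly x J) \<le> (\<Sum>j\<in>J. degree [:- x j / 2, 1 / 2:])"
    unfolding node_poly_def using degree_prod_sum_le[OF True, of "\<lambda>j. [:- x j / 2, 1 / 2:]"]
    by (simp only: comp_def)
  also have "\<dots> \<le> (\<Sum>j\<in>J. 1)"
    by (intro sum_mono) simp
  finally show ?thesis by simp
qed (simp add: node_poly_def)

lemma poly_node_poly_node: "finite J \<Longrightarrow> j \<in> J \<Longrightarrow> poly (node_poly x J) (x j) = 0"
  by (auto simp: poly_node_poly prod_zero_iff)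

lemma norm_diff_le_2: "cmod s \<le> 1 \<Longrightarrow> cmod t \<le> 1 \<Longrightarrow> cmod (s - t) \<le> 2"
  using norm_triangle_ineq4[of s t] by simp

lemma norm_poly_node_poly_le_1:
  assumes "cmod t \<le> 1" and "\<forall>j\<in>J. cmod (x j) \<le> 1"
  shows "cmod (poly (node_poly x J) t) \<le> 1"
proof -
  have "cmod (poly (node_poly x J) t) = (\<Prod>j\<in>J. cmod ((t - x j) / 2))"
    by (simp add: poly_node_poly flip: prod_norm)
  also have "\<dots> \<le> (\<Prod>j\<in>J. 1)"
    using assms by (intro prod_mono) (auto intro: norm_diff_le_2)
  finally show ?thesis by simp
qed

lemma norm_poly_node_poly_ge:
  assumes "0 \<le> \<gamma>" and "\<forall>j\<in>J. 2 * \<gamma> \<le> dist t (x j)"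
  shows "\<gamma> ^ card J \<le> cmod (poly (node_poly x J) t)"
proof -
  have "\<gamma> ^ card J = (\<Prod>j\<in>J. \<gamma>)"
    by simp
  also have "\<dots> \<le> (\<Prod>j\<in>J. cmod ((t - x j) / 2))"
    using assms by (intro prod_mono) (auto simp: dist_norm)
  also have "\<dots> = cmod (poly (node_poly x J) t)"
    by (simp add: poly_node_poly flip: prod_norm)
  finally show ?thesis .
qed

lemma norm_poly_node_poly_diff_le:
  assumes "cmod s \<le> 1" and "cmod t \<le> 1" and "\<forall>j\<in>J. cmod (x j) \<le> 1"
  shows "cmod (poly (node_poly x J) s - poly (node_poly x J) t) \<le> card J / 2 * cmod (s - t)"
proof -
  have "cmod (poly (node_poly x J) s - poly (node_poly x J) t)
      \<le> (\<Sum>j\<in>J. cmod ((s - x j) / 2 - (t - x j) / 2))"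
    unfolding poly_node_poly using assms by (intro norm_prod_diff) (auto intro: norm_diff_le_2)
  also have "\<dots> = (\<Sum>j\<in>J. cmod (s - t) / 2)"
    by (intro sum.cong) (auto simp flip: diff_divide_distrib)
  finally show ?thesis by simp
qed

text \<open>\<open>q\<close> times the linear interpolant of \<open>p/q\<close> at \<open>x\<^sub>0, x\<^sub>1\<close> has degree at most \<open>d\<close> and
  agrees with \<open>p\<close> at all \<open>d + 1\<close> nodes.\<close>
lemma poly_eq_node_times_linear_interpolant:
  fixes p q :: "complex poly"
  assumes "inj_on x {..d}" and "degree p \<le> d" and "degree q < d"
    and "\<forall>j\<in>{2..d}. poly p (x j) = 0 \<and> poly q (x j) = 0"
    and "poly q (x 0) \<noteq> 0" and "poly q (x 1) \<noteq> 0"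
  shows "poly p t = poly q t * (poly p (x 0) / poly q (x 0)
           + (t - x 0) * ((poly p (x 1) / poly q (x 1) - poly p (x 0) / poly q (x 0)) / (x 1 - x 0)))"
proof -
  define c where "c = (poly p (x 1) / poly q (x 1) - poly p (x 0) / poly q (x 0)) / (x 1 - x 0)"
  define r where "r = smult (poly p (x 0) / poly q (x 0)) q + smult c ([:- x 0, 1:] * q)"
  have poly_r: "poly r t = poly q t * (poly p (x 0) / poly q (x 0) + (t - x 0) * c)" for t
    by (simp add: r_def algebra_simps)
  have "x 1 \<noteq> x 0"
    using assms(1,3) by (auto dest: inj_onD[of x _ 1 0])
  have "degree ([:- x 0, 1:] * q) \<le> d"
    using assms(3) degree_mult_le[of "[:- x 0, 1:]" q] by simp
  then have "degree r \<le> d"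
    unfolding r_def using assms(3)
    by (meson degree_add_le degree_smult_le le_trans less_imp_le)
  moreover have "poly p (x j) = poly r (x j)" if "j \<le> d" for j
  proof (cases "j \<in> {2..d}")
    case True
    then show ?thesis
      using assms(4) by (simp add: poly_r)
  next
    case False
    with that have "j = 0 \<or> j = 1"
      by auto
    then show ?thesis
      using assms(5,6) \<open>x 1 \<noteq> x 0\<close> by (auto simp: poly_r c_def)
  qed
  ultimately have "p = r"
    using assms(2) card_image[OF assms(1)]
    by (intro poly_eqI_degree[of "x ` {..d}"]) auto
  then have "poly p t = poly r t"
    by simp
  then show ?thesis
    by (simp only: poly_r c_def)
qed

definition interp_value_coeff :: "(complex \<Rightarrow> complex) \<Rightarrow> complex \<Rightarrow> complex \<Rightarrow> complex \<Rightarrow> complex" where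
  "interp_value_coeff q x0 x1 t = q t * (1 / q x0 + (t - x0) * (q x0 - q x1) / ((x1 - x0) * q x0 * q x1))"

definition interp_slope_coeff :: "(complex \<Rightarrow> complex) \<Rightarrow> complex \<Rightarrow> complex \<Rightarrow> complex \<Rightarrow> complex" where
  "interp_slope_coeff q x0 x1 t = q t * (t - x0) / q x1"

lemma node_times_linear_interpolant_eq_interp_coeffs:
  fixes q :: "complex \<Rightarrow> complex"
  assumes "q x0 \<noteq> 0" and "q x1 \<noteq> 0" and "x1 \<noteq> x0"
  shows "q t * (w0 / q x0 + (t - x0) * ((w1 / q x1 - w0 / q x0) / (x1 - x0)))
       = interp_value_coeff q x0 x1 t * w0 + interp_slope_coeff q x0 x1 t * ((w1 - w0) / (x1 - x0))"
proof -
  have "x1 - x0 \<noteq> 0"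
    using assms(3) by simp
  with assms show ?thesis
    unfolding interp_value_coeff_def interp_slope_coeff_def
    by (simp add: divide_simps) (simp add: algebra_simps)
qed

lemma poly_eq_interp_coeffs_combination:
  fixes x :: "nat \<Rightarrow> complex" and d :: nat and p :: "complex poly"
  defines "q \<equiv> poly (node_poly x {2..d})"
  assumes "inj_on x {..d}" and "1 \<le> d" and "degree p \<le> d" and "\<forall>j\<in>{2..d}. poly p (x j) = 0"
    and "q (x 0) \<noteq> 0" and "q (x 1) \<noteq> 0"
  shows "poly p t = interp_value_coeff q (x 0) (x 1) t * poly p (x 0)
           + interp_slope_coeff q (x 0) (x 1) t * ((poly p (x 1) - poly p (x 0)) / (x 1 - x 0))"
proof -
  have "x 1 \<noteq> x 0"
    using assms(2,3) by (auto dest: inj_onD[of x _ 1 0])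
  have "degree (node_poly x {2..d}) < d"
    using degree_node_poly_le[of x "{2..d}"] \<open>1 \<le> d\<close> by simp
  then have "poly p t = q t * (poly p (x 0) / q (x 0)
               + (t - x 0) * ((poly p (x 1) / q (x 1) - poly p (x 0) / q (x 0)) / (x 1 - x 0)))"
    using assms(2,4-7) unfolding q_def
    by (intro poly_eq_node_times_linear_interpolant) (auto simp: poly_node_poly_node)
  also have "\<dots> = interp_value_coeff q (x 0) (x 1) t * poly p (x 0)
                 + interp_slope_coeff q (x 0) (x 1) t * ((poly p (x 1) - poly p (x 0)) / (x 1 - x 0))"
    using assms(6,7) \<open>x 1 \<noteq> x 0\<close> by (rule node_times_linear_interpolant_eq_interp_coeffs)
  finally show ?thesis .
qed

lemma norm_interp_slope_coeff_le:
  fixes q :: "complex \<Rightarrow> complex"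
  assumes "cmod (q t) \<le> 1" and "cmod (t - x0) \<le> 2" and "0 < g" and "g \<le> cmod (q x1)"
  shows "cmod (interp_slope_coeff q x0 x1 t) \<le> 2 / g"
proof -
  have "cmod (interp_slope_coeff q x0 x1 t) = cmod (q t) * cmod (t - x0) / cmod (q x1)"
    by (simp add: interp_slope_coeff_def norm_mult norm_divide)
  also have "\<dots> \<le> 1 * 2 / g"
    using assms by (intro frac_le mult_mono) auto
  finally show ?thesis
    by simp
qed

lemma norm_interp_value_coeff_le:
  fixes q :: "complex \<Rightarrow> complex"
  assumes "cmod (q t) \<le> 1" and "cmod (t - x0) \<le> 2" and "0 < g" and "g \<le> cmod (q x0)" and "g \<le> cmod (q x1)"
    and "cmod (q x0 - q x1) \<le> K * cmod (x1 - x0)" and "x1 \<noteq> x0"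
  shows "cmod (interp_value_coeff q x0 x1 t) \<le> 1 / g + 2 * K / g\<^sup>2"
proof -
  have difference_quotient: "cmod (q x0 - q x1) / cmod (x1 - x0) \<le> K"
    using assms(6,7) by (simp add: divide_le_eq mult.commute)
  then have "0 \<le> K"
    by (meson divide_nonneg_nonneg norm_ge_zero order_trans)
  have "cmod (1 / q x0) \<le> 1 / g"
    using assms(3,4) by (simp add: norm_divide frac_le)
  moreover have "cmod ((t - x0) * (q x0 - q x1) / ((x1 - x0) * q x0 * q x1))
      = cmod (t - x0) * (cmod (q x0 - q x1) / cmod (x1 - x0)) / (cmod (q x0) * cmod (q x1))"
    by (simp add: norm_mult norm_divide)
  moreover have "\<dots> \<le> 2 * K / (g * g)"
    using assms(2-5) difference_quotient \<open>0 \<le> K\<close> by (intro frac_le mult_mono) auto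
  ultimately have "cmod (1 / q x0 + (t - x0) * (q x0 - q x1) / ((x1 - x0) * q x0 * q x1))
      \<le> 1 / g + 2 * K / g\<^sup>2"
    by (simp add: power2_eq_square norm_triangle_le add_mono)
  then have "cmod (q t) * cmod (1 / q x0 + (t - x0) * (q x0 - q x1) / ((x1 - x0) * q x0 * q x1))
      \<le> 1 * (1 / g + 2 * K / g\<^sup>2)"
    using assms(1) \<open>0 < g\<close> \<open>0 \<le> K\<close> by (intro mult_mono) auto
  then show ?thesis
    by (simp add: interp_value_coeff_def norm_mult)
qed

lemma norm_two_point_interpolant_le:
  fixes x w0 w1 :: "nat \<Rightarrow> complex" and P :: "nat \<Rightarrow> complex poly"
  assumes "0 < \<gamma>" and "1 \<le> d" and disk: "\<forall>j\<le>d. cmod (x j) < 1" and inj: "inj_on x {..d}"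
    and separated: "\<forall>z\<in>closed_segment (x 0) (x 1). \<forall>j\<in>{2..d}. 2 * \<gamma> \<le> dist z (x j)"
    and interpolates: "\<forall>i<n. degree (P i) \<le> d \<and> poly (P i) (x 0) = w0 i \<and> poly (P i) (x 1) = w1 i
                          \<and> (\<forall>j\<in>{2..d}. poly (P i) (x j) = 0)"
    and "cmod \<zeta> < 1"
  shows "cvnorm n (\<lambda>i. poly (P i) \<zeta>)
           \<le> 2 / \<gamma> ^ (d - 1) * cvnorm n (\<lambda>i. (w1 i - w0 i) / (x 1 - x 0))
             + (1 / \<gamma> ^ (d - 1) + real (d - 1) / (\<gamma> ^ (d - 1))\<^sup>2) * cvnorm n w0"
proof -
  define q where "q = poly (node_poly x {2..d})"
  define a where "a = interp_value_coeff q (x 0) (x 1) \<zeta>"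
  define b where "b = interp_slope_coeff q (x 0) (x 1) \<zeta>"
  have "cmod (x j) \<le> 1" if "j \<le> d" for j
    using disk that by fastforce
  then have q_small: "cmod (q \<zeta>) \<le> 1"
    and q_lipschitz: "cmod (q (x 0) - q (x 1)) \<le> real (d - 1) / 2 * cmod (x 1 - x 0)"
    and "cmod (\<zeta> - x 0) \<le> 2"
    unfolding q_def using \<open>cmod \<zeta> < 1\<close> \<open>1 \<le> d\<close> norm_poly_node_poly_diff_le[of "x 0" "x 1" "{2..d}" x]
    by (auto intro!: norm_poly_node_poly_le_1 norm_diff_le_2 simp: norm_minus_commute)
  have q_large: "\<gamma> ^ (d - 1) \<le> cmod (q (x k))" if "k \<in> {0, 1}" for k
    using that separated \<open>0 < \<gamma>\<close> norm_poly_node_poly_ge[of \<gamma> "{2..d}" "x k" x]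
    unfolding q_def by auto
  have "0 < \<gamma> ^ (d - 1)"
    using \<open>0 < \<gamma>\<close> by simp
  then have "q (x 0) \<noteq> 0" and "q (x 1) \<noteq> 0"
    using q_large[of 0] q_large[of 1] by auto
  then have "poly (P i) \<zeta> = a * poly (P i) (x 0) + b * ((poly (P i) (x 1) - poly (P i) (x 0)) / (x 1 - x 0))"
    if "i < n" for i
    unfolding a_def b_def q_def using interpolates that
    by (intro poly_eq_interp_coeffs_combination[OF inj \<open>1 \<le> d\<close>]) auto
  then have "poly (P i) \<zeta> = a * w0 i + b * ((w1 i - w0 i) / (x 1 - x 0))" if "i < n" for i
    using interpolates that by simp
  then have "cvnorm n (\<lambda>i. poly (P i) \<zeta>) = cvnorm n (\<lambda>i. a * w0 i + b * ((w1 i - w0 i) / (x 1 - x 0)))"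
    unfolding cvnorm_def by (intro L2_set_cong) auto
  also have "\<dots> \<le> cmod b * cvnorm n (\<lambda>i. (w1 i - w0 i) / (x 1 - x 0)) + cmod a * cvnorm n w0"
    using cvnorm_linear_combination_le[of n a w0 b] by (simp only: add.commute)
  also have "\<dots> \<le> 2 / \<gamma> ^ (d - 1) * cvnorm n (\<lambda>i. (w1 i - w0 i) / (x 1 - x 0))
             + (1 / \<gamma> ^ (d - 1) + real (d - 1) / (\<gamma> ^ (d - 1))\<^sup>2) * cvnorm n w0"
  proof (intro add_mono mult_right_mono cvnorm_nonneg)
    show "cmod b \<le> 2 / \<gamma> ^ (d - 1)"
      unfolding b_def using q_small \<open>cmod (\<zeta> - x 0) \<le> 2\<close> \<open>0 < \<gamma> ^ (d - 1)\<close> q_large[of 1]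
      by (intro norm_interp_slope_coeff_le) auto
    have "x 1 \<noteq> x 0"
      using inj \<open>1 \<le> d\<close> by (auto dest: inj_onD[of x _ 1 0])
    then show "cmod a \<le> 1 / \<gamma> ^ (d - 1) + real (d - 1) / (\<gamma> ^ (d - 1))\<^sup>2"
      unfolding a_def using q_small \<open>cmod (\<zeta> - x 0) \<le> 2\<close> \<open>0 < \<gamma> ^ (d - 1)\<close> q_large q_lipschitz
        norm_interp_value_coeff_le[where K = "real (d - 1) / 2" and g = "\<gamma> ^ (d - 1)"]
      by simp
  qed
  finally show ?thesis .
qed

theorem lemma6p2:
  fixes \<gamma> :: real and d :: nat
  assumes "\<gamma> > 0" and "d \<ge> 1"
  shows "\<exists>L0 L1 :: real. \<forall>(n::nat) (x::nat \<Rightarrow> complex) (w0::nat \<Rightarrow> complex)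
            (w1::nat \<Rightarrow> complex) (P::nat \<Rightarrow> complex poly).
     (\<forall>j\<le>d. x j \<in> ball 0 1) \<and> inj_on x {..d} \<and>
     cmod (x 0 - x 1) \<le> \<gamma> \<and>
     (\<forall>z\<in>closed_segment (x 0) (x 1). \<forall>j\<in>{2..d}. dist z (x j) \<ge> 2 * \<gamma>) \<and>
     (\<forall>i<n. degree (P i) \<le> d \<and> poly (P i) (x 0) = w0 i \<and> poly (P i) (x 1) = w1 i \<and>
            (\<forall>j\<in>{2..d}. poly (P i) (x j) = 0))
     \<longrightarrow> (\<forall>\<zeta>\<in>ball 0 1.
           cvnorm n (\<lambda>i. poly (P i) \<zeta>)
             \<le> L1 * cvnorm n (\<lambda>i. (w1 i - w0 i) / (x 1 - x 0)) + L0 * cvnorm n w0)"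
  by (intro exI allI impI ballI, elim conjE) (rule norm_two_point_interpolant_le[OF assms]; auto)

end
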